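(* Let $K$ be a field, $\kappa$ an infinite cardinal, and $\mathcal R=(R_\alpha\mid\alpha<\kappa)$ a sequence of $K$-algebras each of which possesses a multiplicative basis. Then $R=R(\kappa,K,\mathcal R)$ has a multiplicative basis. If moreover $R_0$ has a strong multiplicative basis containing a non-zero idempotent, then $R$ has a strong multiplicative basis.
   Context: $R(\kappa,K,\mathcal R)$ denotes the $K$-subalgebra $I\oplus1_P\cdot K$ of $P=\prod_{\alpha<\kappa}R_\alpha$, where $I=\bigoplus_{\alpha<\kappa}R_\alpha$. A $K$-linear basis $B$ of a $K$-algebra is multiplicative if for all $b,b'\in B$ either $bb'=0$ or $bb'\in B$, and strong multiplicative if $bb'\in B$ for all $b,b'\in B$. *)

theory Defs
  imports Complex_Main "HOL-Library.Function_Algebras"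
begin

definition kalgebra :: "('k::field \<Rightarrow> 'a::ab_group_add \<Rightarrow> 'a) \<Rightarrow> 'a set
     \<Rightarrow> ('a \<Rightarrow> 'a \<Rightarrow> 'a) \<Rightarrow> 'a \<Rightarrow> bool" where
  "kalgebra scale W m u \<longleftrightarrow>
     module.subspace scale W \<and> u \<in> W \<and>
     (\<forall>x\<in>W. \<forall>y\<in>W. m x y \<in> W) \<and>
     (\<forall>x\<in>W. \<forall>y\<in>W. \<forall>z\<in>W. m (m x y) z = m x (m y z)) \<and>
     (\<forall>x\<in>W. \<forall>y\<in>W. \<forall>z\<in>W. m (x + y) z = m x z + m y z \<and> m x (y + z) = m x y + m x z) \<and>
     (\<forall>c. \<forall>x\<in>W. \<forall>y\<in>W. m (scale c x) y = scale c (m x y) \<and> m x (scale c y) = scale c (m x y)) \<and>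
     (\<forall>x\<in>W. m u x = x \<and> m x u = x)"

definition lin_basis :: "('k::field \<Rightarrow> 'a::ab_group_add \<Rightarrow> 'a) \<Rightarrow> 'a set \<Rightarrow> 'a set \<Rightarrow> bool" where
  "lin_basis scale W B \<longleftrightarrow> B \<subseteq> W \<and> \<not> module.dependent scale B \<and> module.span scale B = W"

definition mult_basis :: "('k::field \<Rightarrow> 'a::ab_group_add \<Rightarrow> 'a) \<Rightarrow> 'a set
     \<Rightarrow> ('a \<Rightarrow> 'a \<Rightarrow> 'a) \<Rightarrow> 'a set \<Rightarrow> bool" where
  "mult_basis scale W m B \<longleftrightarrow> lin_basis scale W B \<and>
     (\<forall>b\<in>B. \<forall>b'\<in>B. m b b' = 0 \<or> m b b' \<in> B)"

definition strong_mult_basis :: "('k::field \<Rightarrow> 'a::ab_group_add \<Rightarrow> 'a) \<Rightarrow> 'a set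
     \<Rightarrow> ('a \<Rightarrow> 'a \<Rightarrow> 'a) \<Rightarrow> 'a set \<Rightarrow> bool" where
  "strong_mult_basis scale W m B \<longleftrightarrow> lin_basis scale W B \<and>
     (\<forall>b\<in>B. \<forall>b'\<in>B. m b b' \<in> B)"

definition fscale :: "('k \<Rightarrow> 'a \<Rightarrow> 'a) \<Rightarrow> 'k \<Rightarrow> ('i \<Rightarrow> 'a) \<Rightarrow> ('i \<Rightarrow> 'a)" where
  "fscale scale c f = (\<lambda>i. scale c (f i))"

definition Pmul :: "('i \<Rightarrow> 'a \<Rightarrow> 'a \<Rightarrow> 'a) \<Rightarrow> ('i \<Rightarrow> 'a) \<Rightarrow> ('i \<Rightarrow> 'a) \<Rightarrow> ('i \<Rightarrow> 'a)" where
  "Pmul m f g = (\<lambda>i. m i (f i) (g i))"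

definition Iset :: "('i \<Rightarrow> 'a set) \<Rightarrow> ('i \<Rightarrow> 'a::zero) set" where
  "Iset W = {f. (\<forall>i. f i \<in> W i) \<and> finite {i. f i \<noteq> 0}}"

text \<open>R(kappa,K,R) = I + K 1_P, where 1_P = one (the family of units).\<close>
definition Rset :: "('k \<Rightarrow> 'a \<Rightarrow> 'a) \<Rightarrow> ('i \<Rightarrow> 'a set) \<Rightarrow> ('i \<Rightarrow> 'a)
     \<Rightarrow> ('i \<Rightarrow> 'a::ab_group_add) set" where
  "Rset scale W one = {g + fscale scale c one | g c. g \<in> Iset W}"

end

theory Submission
  imports Defs
begin

(* Write delta i a for the family that is a at i and 0 elsewhere. If B i are multiplicative
   bases of the R i, the elements delta i b (b \<in> B i) form a basis of I that is again
   multiplicative, because the product of delta i b and delta j b' is delta i (b b') or 0.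
   Either 1_P lies in I, and then R = I, or adjoining 1_P to a basis of I gives a basis of R;
   as 1_P is a unit, multiplicativity survives.
   For the strong version let B i0 be a strong multiplicative basis containing an idempotent e
   and replace delta i b by delta i b + delta i0 e for i \<noteq> i0. This shears the basis by a vector
   in the span of its delta i0 part, so it is still a basis, and now no product vanishes:
   products involving delta i0 ` B i0 stay there, and the product of two sheared elements is
   delta i (b b') + delta i0 e or, where the old product was 0, delta i0 e.
   Neither the infinitude of the index set nor e \<noteq> 0 is needed. *)

definition delta :: "'i \<Rightarrow> 'a::zero \<Rightarrow> 'i \<Rightarrow> 'a" where
  "delta i a = (\<lambda>j. if j = i then a else 0)"

lemma delta_0 [simp]: "delta i 0 = 0"
  by (auto simp: delta_def)

lemma delta_inject [simp]: "delta i a = delta i b \<longleftrightarrow> a = b"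
  by (metis delta_def)

lemma delta_same [simp]: "delta i a i = a"
  by (simp add: delta_def)

lemma delta_other [simp]: "j \<noteq> i \<Longrightarrow> delta i a j = 0"
  by (simp add: delta_def)

lemma sum_fun_apply: "(\<Sum>x\<in>A. f x) j = (\<Sum>x\<in>A. f x j)"
  by (induction A rule: infinite_finite_induct) auto

lemma sum_delta_support:
  assumes "finite {i. g i \<noteq> 0}"
  shows "g = (\<Sum>i | g i \<noteq> 0. delta i (g i))"
  using assms by (auto simp: fun_eq_iff sum_fun_apply delta_def)

lemma delta_in_Iset:
  assumes "a \<in> W i" and "\<And>k. 0 \<in> W k"
  shows "delta i a \<in> Iset W"
proof -
  have "finite {k. delta i a k \<noteq> 0}"
    by (rule finite_subset[of _ "{i}"]) (auto simp: delta_def)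
  moreover have "\<forall>k. delta i a k \<in> W k"
    using assms by (simp add: delta_def)
  ultimately show ?thesis
    unfolding Iset_def by blast
qed

context vector_space
begin

lemma lin_basis_insert:
  assumes B: "lin_basis scale U B" and v: "v \<notin> U"
  shows "lin_basis scale {u + scale c v | u c. u \<in> U} (insert v B)"
proof -
  have U: "span B = U" "independent B"
    using B unfolding lin_basis_def by auto
  have "span (insert v B) = {u + scale c v | u c. u \<in> U}"
    unfolding span_insert U(1) by (metis (lifting) add_diff_cancel diff_add_cancel)
  moreover have "independent (insert v B)"
    using U v by (simp add: independent_insert)
  moreover have "insert v B \<subseteq> span (insert v B)"
    by (rule span_superset)
  ultimately show ?thesis
    unfolding lin_basis_def by simp
qed

lemma lin_basis_shear:
  assumes B: "lin_basis scale U (B0 \<union> B1)" and disj: "B0 \<inter> B1 = {}" and w: "w \<in> span B0"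
  shows "lin_basis scale U (B0 \<union> (\<lambda>b. b + w) ` B1)"
proof -
  interpret P: vector_space_pair scale scale ..
  let ?B = "B0 \<union> B1" and ?S = "B0 \<union> (\<lambda>b. b + w) ` B1"
  have indep: "independent ?B" and span_B: "span ?B = U"
    using B unfolding lin_basis_def by auto
  define shear where "shear d = P.construct ?B (\<lambda>b. if b \<in> B1 then b + d else b)" for d
  have lin: "Vector_Spaces.linear scale scale (shear d)" for d
    unfolding shear_def using indep by (rule P.linear_construct)
  have shear_basis: "shear d b = (if b \<in> B1 then b + d else b)" if "b \<in> ?B" for b d
    unfolding shear_def using indep that by (rule P.construct_basis)
  have shear_w: "shear d w = w" for d
    using P.linear_eq_on[OF lin linear_id w, of d] disj by (auto simp: shear_basis disjoint_iff)
  have "(shear (- w) \<circ> shear w) x = id x" if "x \<in> span ?B" for x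
  proof (rule P.linear_eq_on[OF _ linear_id that])
    show "Vector_Spaces.linear scale scale (shear (- w) \<circ> shear w)"
      using lin lin by (rule Vector_Spaces.linear_compose)
    show "(shear (- w) \<circ> shear w) b = id b" if "b \<in> ?B" for b
      using that shear_basis lin[THEN P.linear_add] shear_w by auto
  qed
  then have "inj_on (shear w) (span ?B)"
    by (metis comp_apply id_apply inj_onI)
  then have "independent (shear w ` ?B)"
    using lin indep by (intro P.linear_independent_injective_image)
  moreover have "shear w ` ?B = ?S"
    using shear_basis disj by (auto simp: image_Un intro!: image_cong)
  moreover have "span ?S = span ?B"
    unfolding span_eq
  proof
    have "w \<in> span ?B"
      using w span_mono by blast
    then show "?S \<subseteq> span ?B"
      by (auto intro: span_add span_base)
    have "w \<in> span ?S"
      using w span_mono by blast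
    then have "b \<in> span ?S" if "b \<in> B1" for b
      using span_diff[OF span_base[of "b + w" ?S]] that by force
    then show "?B \<subseteq> span ?S"
      by (auto intro: span_base)
  qed
  ultimately show ?thesis
    unfolding lin_basis_def using span_B span_superset by (metis (no_types, lifting))
qed

end

context
  fixes scale :: "'k::field \<Rightarrow> 'a::ab_group_add \<Rightarrow> 'a"
  assumes VS: "vector_space scale"
begin

interpretation V: vector_space scale
  by (rule VS)

lemma vector_space_fscale: "vector_space (fscale scale)"
  unfolding vector_space_def fscale_def
  by (auto simp: fun_eq_iff V.scale_right_distrib V.scale_left_distrib)

interpretation F: vector_space "fscale scale"
  by (rule vector_space_fscale)

lemma linear_delta: "Vector_Spaces.linear scale (fscale scale) (delta i)"
  by (auto simp: Vector_Spaces.linear_iff delta_def fscale_def fun_eq_iff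
      intro: vector_space_fscale VS)

lemma span_delta_image: "F.span (delta i ` B) = delta i ` V.span B"
proof -
  interpret D: vector_space_pair scale "fscale scale" ..
  show ?thesis
    by (rule D.linear_span_image[OF linear_delta])
qed

lemma subspace_Iset:
  assumes "\<And>i. V.subspace (W i)"
  shows "F.subspace (Iset W)"
  unfolding F.subspace_def
proof (intro conjI ballI allI)
  show "0 \<in> Iset W"
    using assms V.subspace_0 by (simp add: Iset_def)
  fix f g c
  assume f: "f \<in> Iset W" and g: "g \<in> Iset W"
  have "{i. (f + g) i \<noteq> 0} \<subseteq> {i. f i \<noteq> 0} \<union> {i. g i \<noteq> 0}"
    "{i. fscale scale c f i \<noteq> 0} \<subseteq> {i. f i \<noteq> 0}"
    by (auto simp: fscale_def)
  then show "f + g \<in> Iset W" "fscale scale c f \<in> Iset W"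
    using f g assms V.subspace_add V.subspace_scale
    by (auto simp: Iset_def fscale_def intro: finite_subset)
qed

lemma independent_delta_images:
  assumes indep_Bs: "\<And>i. V.independent (Bs i)"
  shows "F.independent (\<Union>i. delta i ` Bs i)"
  unfolding F.independent_explicit_module
proof (intro allI impI)
  fix t u v
  assume t: "finite t" "t \<subseteq> (\<Union>i. delta i ` Bs i)"
    and sum0: "(\<Sum>v\<in>t. fscale scale (u v) v) = 0" and "v \<in> t"
  then obtain j b where b: "b \<in> Bs j" "v = delta j b" "delta j b \<in> t"
    by blast
  let ?T = "{b \<in> Bs j. delta j b \<in> t}"
  have inj: "inj_on (delta j) ?T"
    by (simp add: inj_on_def)
  have "0 = (\<Sum>v\<in>t. scale (u v) (v j))"
    using fun_cong[OF sum0, of j] by (simp add: sum_fun_apply fscale_def)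
  also have "\<dots> = (\<Sum>v\<in>delta j ` ?T. scale (u v) (v j))"
  proof (rule sum.mono_neutral_right[OF t(1)])
    show "delta j ` ?T \<subseteq> t"
      by blast
    show "\<forall>v\<in>t - delta j ` ?T. scale (u v) (v j) = 0"
    proof
      fix v
      assume v: "v \<in> t - delta j ` ?T"
      then obtain i b where "b \<in> Bs i" "v = delta i b"
        using t(2) by blast
      with v have "i \<noteq> j"
        by blast
      with \<open>v = delta i b\<close> show "scale (u v) (v j) = 0"
        by simp
    qed
  qed
  also have "\<dots> = (\<Sum>b\<in>?T. scale (u (delta j b)) b)"
    by (simp add: sum.reindex[OF inj])
  finally have "(\<Sum>b\<in>?T. scale (u (delta j b)) b) = 0" ..
  moreover have "finite ?T"
    using finite_subset[OF _ t(1), of "delta j ` ?T"] finite_imageD[OF _ inj] by blast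
  ultimately show "u v = 0"
    using V.independentD[OF indep_Bs, where t = ?T and u = "\<lambda>b. u (delta j b)" and v = b] b
    by auto
qed

lemma lin_basis_Iset:
  assumes B: "\<And>i. lin_basis scale (W i) (Bs i)"
  shows "lin_basis (fscale scale) (Iset W) (\<Union>i. delta i ` Bs i)"
proof -
  let ?B = "\<Union>i. delta i ` Bs i"
  have span_Bs: "V.span (Bs i) = W i" and indep_Bs: "V.independent (Bs i)" for i
    using B unfolding lin_basis_def by auto
  then have sub: "V.subspace (W i)" for i
    by (metis V.subspace_span)
  have "?B \<subseteq> Iset W"
  proof
    fix v
    assume "v \<in> ?B"
    then obtain i b where "b \<in> Bs i" "v = delta i b"
      by blast
    moreover have "Bs i \<subseteq> W i"
      using B[of i] unfolding lin_basis_def by blast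
    moreover have "0 \<in> W k" for k
      using sub[of k] by (rule V.subspace_0)
    ultimately show "v \<in> Iset W"
      using delta_in_Iset[of b W i] by blast
  qed
  then have "F.span ?B \<subseteq> Iset W"
    by (rule F.span_minimal[OF _ subspace_Iset[OF sub]])
  moreover have "g \<in> F.span ?B" if g: "g \<in> Iset W" for g
  proof -
    have "delta i (g i) \<in> F.span ?B" for i
    proof -
      have "delta i (g i) \<in> F.span (delta i ` Bs i)"
        using g span_Bs by (simp add: Iset_def span_delta_image)
      also have "\<dots> \<subseteq> F.span ?B"
        by (rule F.span_mono) blast
      finally show ?thesis .
    qed
    then have "(\<Sum>i | g i \<noteq> 0. delta i (g i)) \<in> F.span ?B"
      by (rule F.span_sum)
    moreover have "g = (\<Sum>i | g i \<noteq> 0. delta i (g i))"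
      using g by (intro sum_delta_support) (simp add: Iset_def)
    ultimately show ?thesis
      by simp
  qed
  moreover have "\<not> F.dependent ?B"
    using independent_delta_images indep_Bs by blast
  ultimately show ?thesis
    using \<open>?B \<subseteq> Iset W\<close> unfolding lin_basis_def by blast
qed

lemma lin_basis_Iset_sheared:
  assumes B: "\<And>i. lin_basis scale (W i) (Bs i)" and e: "e \<in> W i0"
  shows "lin_basis (fscale scale) (Iset W)
           (delta i0 ` Bs i0 \<union> {delta i b + delta i0 e | i b. i \<noteq> i0 \<and> b \<in> Bs i})"
proof -
  let ?B0 = "delta i0 ` Bs i0" and ?B1 = "\<Union>i\<in>-{i0}. delta i ` Bs i"
  have "?B0 \<union> ?B1 = (\<Union>i. delta i ` Bs i)"
    by blast
  then have basis: "lin_basis (fscale scale) (Iset W) (?B0 \<union> ?B1)"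
    using lin_basis_Iset[OF B] by simp
  have "0 \<notin> Bs i0"
    using B[of i0] V.dependent_zero unfolding lin_basis_def by blast
  then have "delta i0 a \<noteq> delta i b" if "a \<in> Bs i0" "i \<noteq> i0" for a i b
    using that by (metis delta_same delta_other)
  then have disjoint: "?B0 \<inter> ?B1 = {}"
    by blast
  have "delta i0 e \<in> F.span ?B0"
    using e B[of i0] by (simp add: span_delta_image lin_basis_def)
  from F.lin_basis_shear[OF basis disjoint this]
  show ?thesis
    by (rule back_subst) blast
qed

lemma lin_basis_Rset:
  assumes B: "lin_basis (fscale scale) (Iset W) B"
    and sub: "\<And>i. V.subspace (W i)" and one: "\<And>i. one i \<in> W i"
  obtains B' where "lin_basis (fscale scale) (Rset scale W one) B'" "B \<subseteq> B'" "B' \<subseteq> insert one B"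
proof (cases "one \<in> Iset W")
  case True
  have I: "F.subspace (Iset W)"
    using subspace_Iset[OF sub] .
  have "Rset scale W one = Iset W"
  proof
    show "Rset scale W one \<subseteq> Iset W"
    proof
      fix f
      assume "f \<in> Rset scale W one"
      then obtain g c where "f = g + fscale scale c one" "g \<in> Iset W"
        unfolding Rset_def by blast
      then show "f \<in> Iset W"
        using True F.subspace_add[OF I] F.subspace_scale[OF I] by simp
    qed
    have "fscale scale 0 one = 0"
      by (simp add: fscale_def fun_eq_iff)
    then show "Iset W \<subseteq> Rset scale W one"
      unfolding Rset_def by (auto intro!: exI[where x = "0 :: 'k"])
  qed
  then show ?thesis
    using that[of B] B by (simp add: subset_insertI)
next
  case False
  show ?thesis
    by (rule that[OF F.lin_basis_insert[OF B False, folded Rset_def]]) auto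
qed

end

context
  fixes scale :: "'k::field \<Rightarrow> 'a::ab_group_add \<Rightarrow> 'a"
    and W :: "'i \<Rightarrow> 'a set"
    and mul :: "'i \<Rightarrow> 'a \<Rightarrow> 'a \<Rightarrow> 'a"
    and one :: "'i \<Rightarrow> 'a"
  assumes VS: "vector_space scale"
    and ALG: "\<And>i. kalgebra scale (W i) (mul i) (one i)"
begin

interpretation V: vector_space scale
  by (rule VS)

lemma subspace_W: "V.subspace (W i)"
  and one_in_W: "one i \<in> W i"
  and mul_unit_left: "x \<in> W i \<Longrightarrow> mul i (one i) x = x"
  and mul_unit_right: "x \<in> W i \<Longrightarrow> mul i x (one i) = x"
  using ALG[of i] unfolding kalgebra_def by blast+

lemma zero_in_W: "0 \<in> W i"
  and add_in_W: "a \<in> W i \<Longrightarrow> b \<in> W i \<Longrightarrow> a + b \<in> W i"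
  using subspace_W V.subspace_0 V.subspace_add by blast+

lemma mul_zero_left: "x \<in> W i \<Longrightarrow> mul i 0 x = 0"
  and mul_zero_right: "x \<in> W i \<Longrightarrow> mul i x 0 = 0"
proof -
  assume x: "x \<in> W i"
  have "mul i (0 + 0) x = mul i 0 x + mul i 0 x" "mul i x (0 + 0) = mul i x 0 + mul i x 0"
    using ALG[of i] x zero_in_W unfolding kalgebra_def by blast+
  then show "mul i 0 x = 0" "mul i x 0 = 0"
    by simp_all
qed

lemma delta_apply_in_W: "a \<in> W i \<Longrightarrow> delta i a k \<in> W k"
  using zero_in_W by (simp add: delta_def)

lemma Rset_apply_in_W:
  assumes "f \<in> Rset scale W one"
  shows "f k \<in> W k"
proof -
  obtain g c where "f = g + fscale scale c one" "g \<in> Iset W"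
    using assms unfolding Rset_def by blast
  then show ?thesis
    using V.subspace_add[OF subspace_W] V.subspace_scale[OF subspace_W] one_in_W
    by (simp add: Iset_def fscale_def)
qed

lemma Pmul_one_left: "(\<And>k. f k \<in> W k) \<Longrightarrow> Pmul mul one f = f"
  and Pmul_one_right: "(\<And>k. f k \<in> W k) \<Longrightarrow> Pmul mul f one = f"
  by (simp_all add: Pmul_def mul_unit_left mul_unit_right fun_eq_iff)

lemma Pmul_add_left:
  "(\<And>k. f k \<in> W k) \<Longrightarrow> (\<And>k. g k \<in> W k) \<Longrightarrow> (\<And>k. h k \<in> W k) \<Longrightarrow>
    Pmul mul (f + g) h = Pmul mul f h + Pmul mul g h"
  and Pmul_add_right:
  "(\<And>k. f k \<in> W k) \<Longrightarrow> (\<And>k. g k \<in> W k) \<Longrightarrow> (\<And>k. h k \<in> W k) \<Longrightarrow>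
    Pmul mul h (f + g) = Pmul mul h f + Pmul mul h g"
  using ALG unfolding kalgebra_def by (simp_all add: Pmul_def fun_eq_iff)

lemma Pmul_delta:
  assumes "a \<in> W i" and "b \<in> W j"
  shows "Pmul mul (delta i a) (delta j b) = (if i = j then delta i (mul i a b) else 0)"
  using assms mul_zero_left mul_zero_right zero_in_W
  by (auto simp: Pmul_def delta_def fun_eq_iff)

lemma Pmul_closed_insert_one:
  assumes B': "B' \<subseteq> insert one B" "B' \<subseteq> Rset scale W one" "B' \<subseteq> C"
    and closed: "\<And>x y. x \<in> B \<Longrightarrow> y \<in> B \<Longrightarrow> Pmul mul x y \<in> C"
    and x: "x \<in> B'" and y: "y \<in> B'"
  shows "Pmul mul x y \<in> C"
proof -
  have "x \<in> C" "y \<in> C" "\<And>k. x k \<in> W k" "\<And>k. y k \<in> W k"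
    using B' x y Rset_apply_in_W by blast+
  moreover consider "x = one" | "y = one" | "x \<in> B" "y \<in> B"
    using B'(1) x y by blast
  ultimately show ?thesis
    using closed Pmul_one_left Pmul_one_right by metis
qed

lemma ex_mult_basis_Rset:
  assumes B: "lin_basis (fscale scale) (Iset W) B"
    and closed: "\<And>x y. x \<in> B \<Longrightarrow> y \<in> B \<Longrightarrow> Pmul mul x y = 0 \<or> Pmul mul x y \<in> B"
  shows "\<exists>B'. mult_basis (fscale scale) (Rset scale W one) (Pmul mul) B'"
proof -
  obtain B' where B': "lin_basis (fscale scale) (Rset scale W one) B'" "B \<subseteq> B'" "B' \<subseteq> insert one B"
    using lin_basis_Rset[OF VS B subspace_W one_in_W] .
  have "B' \<subseteq> Rset scale W one"
    using B'(1) unfolding lin_basis_def by blast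
  moreover have "Pmul mul x y \<in> insert 0 B'" if "x \<in> B" "y \<in> B" for x y
    using closed[OF that] B'(2) by blast
  ultimately have "Pmul mul x y \<in> insert 0 B'" if "x \<in> B'" "y \<in> B'" for x y
    using Pmul_closed_insert_one[OF B'(3)] that by blast
  then show ?thesis
    using B'(1) unfolding mult_basis_def by blast
qed

lemma ex_strong_mult_basis_Rset:
  assumes B: "lin_basis (fscale scale) (Iset W) B"
    and closed: "\<And>x y. x \<in> B \<Longrightarrow> y \<in> B \<Longrightarrow> Pmul mul x y \<in> B"
  shows "\<exists>B'. strong_mult_basis (fscale scale) (Rset scale W one) (Pmul mul) B'"
proof -
  obtain B' where B': "lin_basis (fscale scale) (Rset scale W one) B'" "B \<subseteq> B'" "B' \<subseteq> insert one B"
    using lin_basis_Rset[OF VS B subspace_W one_in_W] .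
  have "B' \<subseteq> Rset scale W one"
    using B'(1) unfolding lin_basis_def by blast
  moreover have "Pmul mul x y \<in> B'" if "x \<in> B" "y \<in> B" for x y
    using closed[OF that] B'(2) by blast
  ultimately have "Pmul mul x y \<in> B'" if "x \<in> B'" "y \<in> B'" for x y
    using Pmul_closed_insert_one[OF B'(3)] that by blast
  then show ?thesis
    using B'(1) unfolding strong_mult_basis_def by blast
qed

lemma delta_basis_mult_closed:
  assumes MB: "\<And>i. mult_basis scale (W i) (mul i) (Bs i)"
    and x: "x \<in> (\<Union>i. delta i ` Bs i)" and y: "y \<in> (\<Union>i. delta i ` Bs i)"
  shows "Pmul mul x y = 0 \<or> Pmul mul x y \<in> (\<Union>i. delta i ` Bs i)"
proof -
  obtain i a j b where a: "a \<in> Bs i" "x = delta i a" and b: "b \<in> Bs j" "y = delta j b"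
    using x y by blast
  have "a \<in> W i" "b \<in> W j"
    using MB a b unfolding mult_basis_def lin_basis_def by blast+
  then have "Pmul mul x y = (if i = j then delta i (mul i a b) else 0)"
    using a b by (simp add: Pmul_delta)
  moreover have "i = j \<Longrightarrow> mul i a b = 0 \<or> delta i (mul i a b) \<in> (\<Union>i. delta i ` Bs i)"
    using MB[of i] a b unfolding mult_basis_def by blast
  ultimately show ?thesis
    by auto
qed

lemma sheared_basis_mult_closed:
  assumes MB: "\<And>i. mult_basis scale (W i) (mul i) (Bs i)"
    and strong: "\<And>a b. a \<in> Bs i0 \<Longrightarrow> b \<in> Bs i0 \<Longrightarrow> mul i0 a b \<in> Bs i0"
    and e: "e \<in> Bs i0" and idem: "mul i0 e e = e"
  defines "S \<equiv> delta i0 ` Bs i0 \<union> {delta i b + delta i0 e | i b. i \<noteq> i0 \<and> b \<in> Bs i}"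
  assumes x: "x \<in> S" and y: "y \<in> S"
  shows "Pmul mul x y \<in> S"
proof -
  have in_W: "a \<in> W i" if "a \<in> Bs i" for a i
    using MB[of i] that unfolding mult_basis_def lin_basis_def by blast
  note Pmul_simps = Pmul_delta Pmul_add_left Pmul_add_right delta_apply_in_W add_in_W in_W
  have in_S0: "delta i0 a \<in> S" if "a \<in> Bs i0" for a
    using that unfolding S_def by blast
  have in_S1: "delta i a + delta i0 e \<in> S" if "i \<noteq> i0" "a \<in> Bs i" for i a
    using that unfolding S_def by blast
  have cases_S: thesis
    if "v \<in> S" "\<And>a. a \<in> Bs i0 \<Longrightarrow> v = delta i0 a \<Longrightarrow> thesis"
      "\<And>i a. i \<noteq> i0 \<Longrightarrow> a \<in> Bs i \<Longrightarrow> v = delta i a + delta i0 e \<Longrightarrow> thesis" for v thesis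
    using that unfolding S_def by blast
  show ?thesis
  proof (rule cases_S[OF x]; rule cases_S[OF y])
    fix a b
    assume "a \<in> Bs i0" "x = delta i0 a" "b \<in> Bs i0" "y = delta i0 b"
    then show ?thesis
      using strong in_S0 by (simp add: Pmul_simps)
  next
    fix a j b
    assume "a \<in> Bs i0" "x = delta i0 a" "j \<noteq> i0" "b \<in> Bs j" "y = delta j b + delta i0 e"
    then show ?thesis
      using strong e in_S0 by (simp add: Pmul_simps)
  next
    fix i a b
    assume "i \<noteq> i0" "a \<in> Bs i" "x = delta i a + delta i0 e" "b \<in> Bs i0" "y = delta i0 b"
    then show ?thesis
      using strong e in_S0 by (simp add: Pmul_simps)
  next
    fix i a j b
    assume x': "i \<noteq> i0" "a \<in> Bs i" "x = delta i a + delta i0 e"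
      and y': "j \<noteq> i0" "b \<in> Bs j" "y = delta j b + delta i0 e"
    then have "Pmul mul x y = (if i = j then delta i (mul i a b) else 0) + delta i0 e"
      using e idem by (simp add: Pmul_simps)
    moreover have "i = j \<Longrightarrow> mul i a b = 0 \<or> mul i a b \<in> Bs i"
      using MB[of i] x' y' unfolding mult_basis_def by blast
    ultimately show ?thesis
      using x' e in_S0 in_S1 by auto
  qed
qed

end

theorem lemma5p8:
  fixes scale :: "'k::field \<Rightarrow> 'a::ab_group_add \<Rightarrow> 'a"
    and W :: "'i \<Rightarrow> 'a set"
    and mul :: "'i \<Rightarrow> 'a \<Rightarrow> 'a \<Rightarrow> 'a"
    and one :: "'i \<Rightarrow> 'a"
    and i0 :: 'i
  assumes "vector_space scale"
    and "infinite (UNIV :: 'i set)"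
    and "\<forall>i. kalgebra scale (W i) (mul i) (one i)"
    and "\<forall>i. \<exists>B. mult_basis scale (W i) (mul i) B"
  shows "(\<exists>B. mult_basis (fscale scale) (Rset scale W one) (Pmul mul) B) \<and>
         ((\<exists>B. strong_mult_basis scale (W i0) (mul i0) B \<and>
               (\<exists>e\<in>B. e \<noteq> 0 \<and> mul i0 e e = e))
          \<longrightarrow> (\<exists>B. strong_mult_basis (fscale scale) (Rset scale W one) (Pmul mul) B))"
proof (intro conjI impI)
  note VS = assms(1)
  have ALG: "\<And>i. kalgebra scale (W i) (mul i) (one i)"
    using assms(3) by blast
  obtain Bs where MB: "\<And>i. mult_basis scale (W i) (mul i) (Bs i)"
    using assms(4) by metis
  then have LB: "\<And>i. lin_basis scale (W i) (Bs i)"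
    unfolding mult_basis_def by blast
  show "\<exists>B. mult_basis (fscale scale) (Rset scale W one) (Pmul mul) B"
    by (rule ex_mult_basis_Rset[OF VS ALG lin_basis_Iset[OF VS LB]
          delta_basis_mult_closed[OF VS ALG MB]])
  assume "\<exists>B. strong_mult_basis scale (W i0) (mul i0) B \<and> (\<exists>e\<in>B. e \<noteq> 0 \<and> mul i0 e e = e)"
  then obtain B0 e where B0: "strong_mult_basis scale (W i0) (mul i0) B0"
    and e: "e \<in> B0" and idem: "mul i0 e e = e"
    by blast
  let ?Bs = "Bs(i0 := B0)"
  have MB': "\<And>i. mult_basis scale (W i) (mul i) (?Bs i)"
    and strong: "\<And>a b. a \<in> ?Bs i0 \<Longrightarrow> b \<in> ?Bs i0 \<Longrightarrow> mul i0 a b \<in> ?Bs i0"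
    and e': "e \<in> ?Bs i0" "e \<in> W i0"
    using MB B0 e unfolding mult_basis_def strong_mult_basis_def lin_basis_def by auto
  then have LB': "\<And>i. lin_basis scale (W i) (?Bs i)"
    unfolding mult_basis_def by blast
  show "\<exists>B. strong_mult_basis (fscale scale) (Rset scale W one) (Pmul mul) B"
    by (rule ex_strong_mult_basis_Rset[OF VS ALG
          lin_basis_Iset_sheared[where Bs = ?Bs, OF VS LB' e'(2)]
          sheared_basis_mult_closed[where Bs = ?Bs, OF VS ALG MB' strong e'(1) idem]])
qed

end
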